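(* Let $A,s$ be positive integers, $(\alpha,\beta)\in(\mathbb{Z}/s\mathbb{Z})^2$, and let $\ell=\mathbb{Z}v_1+\mathbb{Z}v_2=[A,b,a]$ with $(a,b)\equiv(\alpha,\beta)\pmod s$ and $Aa-b^2>0$. Let $L$ be a $\mathbb{Z}$-lattice and $w\in R(A,L)$ with $L\prec_{A,(\alpha,\beta),s}w$. If $\ell$ is represented by $L$, then there exists a representation $\sigma:\ell\to L$ with $\sigma(v_1)=w$.
   Context: All $\mathbb{Z}$-lattices are free $\mathbb{Z}$-modules of finite rank with a positive definite, integral symmetric bilinear form $B$; $Q(v)=B(v,v)$. A representation $\sigma:\ell\to L$ is a linear map preserving $B$. $[A,b,a]$ denotes the binary lattice $\mathbb{Z}v_1+\mathbb{Z}v_2$ with $Q(v_1)=A$, $B(v_1,v_2)=b$, $Q(v_2)=a$. Let $V=\mathbb{Q}L$. $R(A,L)=\{v\in L:Q(v)=A\}$. For $v\in R(A,L)$, $R_v(L,\alpha,\beta,s)=\{u\in L/sL: Q(u)\equiv\alpha,\ B(u,v)\equiv\beta\pmod s\}$, $R_v(L,L,s)=\{\tau\in O(V):\tau(sL)\subseteq L,\ \tau(v)\in L\}$, and for $v,w\in R(A,L)$, $R_{v,w}(L,s)=\{\tau\in R_v(L,L,s):\tau(v)=w\}$. We write $L\prec_{A,(\alpha,\beta),s}w$ if for every $v\in R(A,L)$ and every coset $u\in R_v(L,\alpha,\beta,s)$ there is $\tau\in R_{v,w}(L,s)$ with $\tau(\tilde u)\in L$ for all $\tilde u\in L$ with $\tilde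 u\equiv u\pmod{sL}$. *)

theory Defs
  imports "HOL-Analysis.Analysis" "HOL-Number_Theory.Cong"
begin

text \<open>A Z-lattice L of rank CARD('n) is modelled as Z^n (vectors int^'n) with an
integer Gram matrix G (symmetric, positive definite).  V = QL is rat^'n with the
same form.\<close>

definition bil :: "'a::comm_semiring_1^'n^'n \<Rightarrow> 'a^'n \<Rightarrow> 'a^'n \<Rightarrow> 'a" where
  "bil G u v = (\<Sum>i\<in>UNIV. \<Sum>j\<in>UNIV. u$i * G$i$j * v$j)"

abbreviation qf :: "'a::comm_semiring_1^'n^'n \<Rightarrow> 'a^'n \<Rightarrow> 'a" where
  "qf G v \<equiv> bil G v v"

definition lattice_gram :: "int^'n^'n \<Rightarrow> bool" where
  "lattice_gram G \<longleftrightarrow> transpose G = G \<and> (\<forall>x. x \<noteq> 0 \<longrightarrow> qf G x > 0)"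

definition vrat :: "int^'n \<Rightarrow> rat^'n" where
  "vrat x = (\<chi> i. of_int (x$i))"

definition Grat :: "int^'n^'n \<Rightarrow> rat^'n^'n" where
  "Grat G = (\<chi> i j. of_int (G$i$j))"

definition inL :: "rat^'n \<Rightarrow> bool" where
  "inL x \<longleftrightarrow> (\<forall>i. x$i \<in> \<int>)"

definition isometry_V :: "int^'n^'n \<Rightarrow> rat^'n^'n \<Rightarrow> bool" where
  "isometry_V G T \<longleftrightarrow> (\<forall>x y. bil (Grat G) (T *v x) (T *v y) = bil (Grat G) x y)"

definition R_LLs :: "int^'n^'n \<Rightarrow> int^'n \<Rightarrow> int \<Rightarrow> (rat^'n^'n) set" where
  "R_LLs G v s = {T. isometry_V G T \<and> (\<forall>x. inL (T *v vrat (s *s x))) \<and> inL (T *v vrat v)}"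

definition R_vw :: "int^'n^'n \<Rightarrow> int^'n \<Rightarrow> int^'n \<Rightarrow> int \<Rightarrow> (rat^'n^'n) set" where
  "R_vw G v w s = {T \<in> R_LLs G v s. T *v vrat v = vrat w}"

text \<open>L \<prec>_{A,(alpha,beta),s} w; cosets u of L/sL are given by representatives u \<in> L
(the defining congruences depend only on the coset).\<close>
definition prec :: "int^'n^'n \<Rightarrow> int \<Rightarrow> int \<Rightarrow> int \<Rightarrow> int \<Rightarrow> int^'n \<Rightarrow> bool" where
  "prec G A \<alpha> \<beta> s w \<longleftrightarrow>
     (\<forall>v. qf G v = A \<longrightarrow>
       (\<forall>u. [qf G u = \<alpha>] (mod s) \<and> [bil G u v = \<beta>] (mod s) \<longrightarrow>
          (\<exists>T \<in> R_vw G v w s. \<forall>u'. (\<exists>x. u' = u + s *s x) \<longrightarrow> inL (T *v vrat u'))))"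

definition represents_binary :: "int^'n^'n \<Rightarrow> int \<Rightarrow> int \<Rightarrow> int \<Rightarrow> int^'n \<Rightarrow> int^'n \<Rightarrow> bool" where
  "represents_binary G A b a x y \<longleftrightarrow> qf G x = A \<and> bil G x y = b \<and> qf G y = a"

end

theory Submission
  imports Defs
begin

text \<open>Apply \<open>L \<prec>\<^bsub>A,(\<alpha>,\<beta>),s\<^esub> w\<close> to a given representation \<open>v\<^sub>1 \<mapsto> x, v\<^sub>2 \<mapsto> y\<close>:
  the coset of \<open>y\<close> satisfies the congruences, so some isometry \<open>T\<close> of \<open>V\<close> sends \<open>x\<close> to \<open>w\<close>
  and \<open>y\<close> into \<open>L\<close>. Being an isometry, \<open>T\<close> keeps the Gram matrix, so \<open>v\<^sub>1 \<mapsto> w, v\<^sub>2 \<mapsto> T y\<close>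
  is again a representation of \<open>[A,b,a]\<close>.\<close>

lemma bil_vrat: "bil (Grat G) (vrat u) (vrat v) = (of_int (bil G u v) :: rat)"
  by (simp add: bil_def vrat_def Grat_def of_int_sum of_int_mult)

lemma bil_commute:
  assumes "transpose G = G"
  shows "bil G u v = bil G v (u :: 'a::comm_semiring_1^'n)"
proof -
  have G_sym: "G$i$j = G$j$i" for i j
    using arg_cong[OF assms, of "\<lambda>M. M$i$j"] by (simp add: transpose_def)
  have "bil G u v = (\<Sum>j\<in>UNIV. \<Sum>i\<in>UNIV. u$i * G$i$j * v$j)"
    unfolding bil_def by (rule sum.swap)
  also have "\<dots> = bil G v u"
    unfolding bil_def by (intro sum.cong refl) (simp add: G_sym mult_ac)
  finally show ?thesis .
qed

lemma inL_iff_vrat: "inL z \<longleftrightarrow> (\<exists>y. z = vrat y)"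
proof
  assume "inL z"
  then have "of_int \<lfloor>z$i\<rfloor> = z$i" for i
    unfolding inL_def by (metis Ints_cases of_int_floor_cancel)
  then have "z = vrat (\<chi> i. \<lfloor>z$i\<rfloor>)"
    by (simp add: vrat_def vec_eq_iff del: of_int_floor_cancel)
  then show "\<exists>y. z = vrat y" ..
next
  assume "\<exists>y. z = vrat y"
  then show "inL z"
    unfolding inL_def vrat_def by auto
qed

lemma isometry_V_bil_eq:
  assumes "isometry_V G T" "T *v vrat u = vrat u'" "T *v vrat v = vrat v'"
  shows "bil G u' v' = bil G u v"
proof -
  have "(of_int (bil G u' v') :: rat) = bil (Grat G) (T *v vrat u) (T *v vrat v)"
    using assms(2,3) by (simp add: bil_vrat)
  also have "\<dots> = of_int (bil G u v)"
    using assms(1) by (simp add: isometry_V_def bil_vrat)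
  finally show ?thesis by simp
qed

lemma prec_transport:
  assumes "prec G A \<alpha> \<beta> s w" "qf G v = A"
    and "[qf G u = \<alpha>] (mod s)" "[bil G u v = \<beta>] (mod s)"
  shows "\<exists>u'. bil G w u' = bil G v u \<and> qf G u' = qf G u"
proof -
  obtain T where T: "T \<in> R_vw G v w s"
    and T_coset: "\<forall>u'. (\<exists>x. u' = u + s *s x) \<longrightarrow> inL (T *v vrat u')"
    using assms unfolding prec_def by blast
  have "inL (T *v vrat u)"
    using T_coset by (metis add.right_neutral vector_smult_rzero)
  then obtain u' where u': "T *v vrat u = vrat u'"
    by (auto simp: inL_iff_vrat)
  have iso: "isometry_V G T" and Tv: "T *v vrat v = vrat w"
    using T unfolding R_vw_def R_LLs_def by auto
  show ?thesis
    using isometry_V_bil_eq[OF iso Tv u'] isometry_V_bil_eq[OF iso u' u'] by blast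
qed

theorem lemma2p3:
  fixes G :: "int^'n^'n" and A s \<alpha> \<beta> a b :: int and w :: "int^'n"
  assumes "lattice_gram G"
    and "A > 0" and "s > 0"
    and "[a = \<alpha>] (mod s)" and "[b = \<beta>] (mod s)"
    and "A * a - b^2 > 0"
    and "qf G w = A"
    and "prec G A \<alpha> \<beta> s w"
    and "\<exists>x y. represents_binary G A b a x y"
  shows "\<exists>y. represents_binary G A b a w y"
proof -
  obtain x y where xy: "qf G x = A" "bil G x y = b" "qf G y = a"
    using assms(9) unfolding represents_binary_def by blast
  have "[bil G y x = \<beta>] (mod s)"
    using xy(2) assms(1,5) bil_commute unfolding lattice_gram_def by metis
  moreover have "[qf G y = \<alpha>] (mod s)"
    using xy(3) assms(4) by simp
  ultimately obtain y' where "bil G w y' = b" "qf G y' = a"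
    using prec_transport[OF assms(8) xy(1)] xy(2,3) by metis
  then show ?thesis
    unfolding represents_binary_def using assms(7) by blast
qed

end
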